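(* Let $\Gamma$ be a splice diagram satisfying the edge determinant condition and let $a,b$ be two adjacent nodes of $\Gamma$. Let $P_a$ (resp. $P_b$) be the set of leaves $\lambda$ of $\Gamma$ with $a\in[\lambda,b]$ (resp. $b\in[\lambda,a]$). Then: (1) $\beta^{a}_{P_a}=\beta^{b}_{P_a}$ and $\beta^{a}_{P_b}=\beta^{b}_{P_b}$; denote these points $\beta_{P_a}$ and $\beta_{P_b}$. (2) The points $\rho(a)$ and $\rho(b)$ lie on the segment $[\beta_{P_a},\beta_{P_b}]$. (3) Identifying this segment with $[0,1]$ via $\beta_{P_a}\mapsto0$, $\beta_{P_b}\mapsto1$, we have $\beta_{P_a}<\rho(a)<\rho(b)<\beta_{P_b}$.
   Context: A splice diagram is a finite tree $\Gamma$ with at least one vertex of valency $\geq3$ and no vertex of valency $2$; vertices of valency $1$ are leaves, others nodes. For each node $v$ and edge $e$ at $v$ a positive integer weight $d_{v,e}$ is given; $d_v=\prod_{e\ni v}d_{v,e}$; $d_{v,u}$ is the weight at $v$ of the edge toward $u$. For distinct vertices $u,v$, $\ell_{u,v}$ is the product of all $d_{w,e}$ with $w$ a node on the geodesic $[u,v]$ and $e$ an edge at $w$ not in $[u,v]$. Edge determinant condition: $d_{u,v}d_{v,u}>\ell_{u,v}$ for every edge $[u,v]$ between nodes. With $n$ leaves, let $(e_\lambda)$ be the standard basis of $\mathbb{R}^n$ indexed by leaves, $w_\lambda=e_\lambda$, and $w_u=\sum_\lambda\ell_{u,\lambda}e_\lambda$ for a node $u$. Set $\rho(u)=w_u/|w_u|$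 ($|\cdot|$ the $1$-norm) for every vertex $u$. For a node $v$ and a set $L$ of leaves, the barycenter is $\beta^v_L=\sum_{\lambda\in L}\frac{\ell_{v,\lambda}}{\ell}e_\lambda$ with $\ell=\sum_{\lambda\in L}\ell_{v,\lambda}$. *)

theory Defs
  imports Main Complex_Main
begin

(* Trees are given by a vertex set V and a symmetric irreflexive adjacency relation E.
   Edge weights: d v u is the weight d_{v,e} at the node v of the edge e = [v,u]. *)

definition walk :: "('v \<Rightarrow> 'v \<Rightarrow> bool) \<Rightarrow> 'v list \<Rightarrow> bool" where
  "walk E p \<longleftrightarrow> (\<forall>i. Suc i < length p \<longrightarrow> E (p ! i) (p ! Suc i))"

definition spath :: "'v set \<Rightarrow> ('v \<Rightarrow> 'v \<Rightarrow> bool) \<Rightarrow> 'v \<Rightarrow> 'v \<Rightarrow> 'v list \<Rightarrow> bool" where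
  "spath V E u v p \<longleftrightarrow> p \<noteq> [] \<and> hd p = u \<and> last p = v \<and> set p \<subseteq> V \<and> distinct p \<and> walk E p"

definition is_tree :: "'v set \<Rightarrow> ('v \<Rightarrow> 'v \<Rightarrow> bool) \<Rightarrow> bool" where
  "is_tree V E \<longleftrightarrow> finite V \<and> V \<noteq> {} \<and>
     (\<forall>x y. E x y \<longrightarrow> x \<in> V \<and> y \<in> V) \<and>
     (\<forall>x y. E x y \<longrightarrow> E y x) \<and> (\<forall>x. \<not> E x x) \<and>
     (\<forall>u\<in>V. \<forall>v\<in>V. \<exists>!p. spath V E u v p)"

definition geodpath :: "'v set \<Rightarrow> ('v \<Rightarrow> 'v \<Rightarrow> bool) \<Rightarrow> 'v \<Rightarrow> 'v \<Rightarrow> 'v list" where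
  "geodpath V E u v = (THE p. spath V E u v p)"

definition geod :: "'v set \<Rightarrow> ('v \<Rightarrow> 'v \<Rightarrow> bool) \<Rightarrow> 'v \<Rightarrow> 'v \<Rightarrow> 'v set" where
  "geod V E u v = set (geodpath V E u v)"

definition edge_on_geod :: "'v set \<Rightarrow> ('v \<Rightarrow> 'v \<Rightarrow> bool) \<Rightarrow> 'v \<Rightarrow> 'v \<Rightarrow> 'v \<Rightarrow> 'v \<Rightarrow> bool" where
  "edge_on_geod V E u v w x \<longleftrightarrow>
     (let p = geodpath V E u v in \<exists>i. Suc i < length p \<and> {p ! i, p ! Suc i} = {w, x})"

definition valency :: "'v set \<Rightarrow> ('v \<Rightarrow> 'v \<Rightarrow> bool) \<Rightarrow> 'v \<Rightarrow> nat" where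
  "valency V E v = card {u \<in> V. E v u}"

definition is_leaf :: "'v set \<Rightarrow> ('v \<Rightarrow> 'v \<Rightarrow> bool) \<Rightarrow> 'v \<Rightarrow> bool" where
  "is_leaf V E v \<longleftrightarrow> v \<in> V \<and> valency V E v = 1"

definition is_node :: "'v set \<Rightarrow> ('v \<Rightarrow> 'v \<Rightarrow> bool) \<Rightarrow> 'v \<Rightarrow> bool" where
  "is_node V E v \<longleftrightarrow> v \<in> V \<and> \<not> is_leaf V E v"

definition splice_diagram :: "'v set \<Rightarrow> ('v \<Rightarrow> 'v \<Rightarrow> bool) \<Rightarrow> ('v \<Rightarrow> 'v \<Rightarrow> nat) \<Rightarrow> bool" where
  "splice_diagram V E d \<longleftrightarrow> is_tree V E \<and>
     (\<exists>v\<in>V. valency V E v \<ge> 3) \<and> (\<forall>v\<in>V. valency V E v \<noteq> 2) \<and>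
     (\<forall>v u. is_node V E v \<and> E v u \<longrightarrow> d v u > 0)"

definition dtow :: "'v set \<Rightarrow> ('v \<Rightarrow> 'v \<Rightarrow> bool) \<Rightarrow> ('v \<Rightarrow> 'v \<Rightarrow> nat) \<Rightarrow> 'v \<Rightarrow> 'v \<Rightarrow> nat" where
  "dtow V E d v u = d v (geodpath V E v u ! 1)"

definition ell :: "'v set \<Rightarrow> ('v \<Rightarrow> 'v \<Rightarrow> bool) \<Rightarrow> ('v \<Rightarrow> 'v \<Rightarrow> nat) \<Rightarrow> 'v \<Rightarrow> 'v \<Rightarrow> nat" where
  "ell V E d u v = (\<Prod>w \<in> {w \<in> geod V E u v. is_node V E w}.
      \<Prod>x \<in> {x \<in> V. E w x \<and> \<not> edge_on_geod V E u v w x}. d w x)"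

definition edge_determinant :: "'v set \<Rightarrow> ('v \<Rightarrow> 'v \<Rightarrow> bool) \<Rightarrow> ('v \<Rightarrow> 'v \<Rightarrow> nat) \<Rightarrow> bool" where
  "edge_determinant V E d \<longleftrightarrow>
     (\<forall>u v. is_node V E u \<and> is_node V E v \<and> E u v \<longrightarrow>
        dtow V E d u v * dtow V E d v u > ell V E d u v)"

(* vectors in R^n (n = number of leaves) are functions 'v \<Rightarrow> real vanishing off the leaves *)
definition wvec :: "'v set \<Rightarrow> ('v \<Rightarrow> 'v \<Rightarrow> bool) \<Rightarrow> ('v \<Rightarrow> 'v \<Rightarrow> nat) \<Rightarrow> 'v \<Rightarrow> 'v \<Rightarrow> real" where
  "wvec V E d u = (if is_leaf V E u then (\<lambda>\<mu>. if \<mu> = u then 1 else 0)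
                   else (\<lambda>\<mu>. if is_leaf V E \<mu> then real (ell V E d u \<mu>) else 0))"

definition norm1 :: "'v set \<Rightarrow> ('v \<Rightarrow> 'v \<Rightarrow> bool) \<Rightarrow> ('v \<Rightarrow> real) \<Rightarrow> real" where
  "norm1 V E f = (\<Sum>\<mu> \<in> {\<mu>. is_leaf V E \<mu>}. \<bar>f \<mu>\<bar>)"

definition rho :: "'v set \<Rightarrow> ('v \<Rightarrow> 'v \<Rightarrow> bool) \<Rightarrow> ('v \<Rightarrow> 'v \<Rightarrow> nat) \<Rightarrow> 'v \<Rightarrow> 'v \<Rightarrow> real" where
  "rho V E d u = (\<lambda>\<mu>. wvec V E d u \<mu> / norm1 V E (wvec V E d u))"

definition bary :: "'v set \<Rightarrow> ('v \<Rightarrow> 'v \<Rightarrow> bool) \<Rightarrow> ('v \<Rightarrow> 'v \<Rightarrow> nat) \<Rightarrow> 'v \<Rightarrow> 'v set \<Rightarrow> 'v \<Rightarrow> real" where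
  "bary V E d v L = (\<lambda>\<mu>. if \<mu> \<in> L
       then real (ell V E d v \<mu>) / (\<Sum>l \<in> L. real (ell V E d v l)) else 0)"

end

theory Submission
  imports Defs
begin

(* For a leaf l on the side of a (b not on [a,l]) the geodesic [b,l] is b followed by [a,l].
   Comparing the two products gives  ell_{a,l} * Q_b = d_{a,b} * ell_{b,l},  where
   Q_b = other_weights b a is the product of the weights at b other than d_{b,a}.  So ell_{a,.}
   and ell_{b,.} are proportional on P_a, and symmetrically on P_b, which is (1).
   Splitting w_u over P_a and P_b writes rho(u) as a convex combination of the two barycenters
   with parameter t_u = M_u(P_b) / (M_u(P_a) + M_u(P_b)), where M_u = ell_mass u is the total
   ell_{u,.}-weight.  Via the two proportionality constants, t_a < t_b becomes
   Q_a * Q_b < d_{a,b} * d_{b,a}, and since Q_a * Q_b = ell_{a,b} this is the edge determinant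
   condition. *)

lemma walk_iff_successively: "walk E p \<longleftrightarrow> successively E p"
  unfolding walk_def successively_conv_nth ..

lemma spath_ends_in: "spath V E u v p \<Longrightarrow> u \<in> V \<and> v \<in> V"
  unfolding spath_def by (auto dest: hd_in_set last_in_set)

lemma spath_drop:
  assumes p: "spath V E u v p" and j: "j < length p"
  shows "spath V E (p ! j) v (drop j p)"
proof -
  have "successively E (take j p @ drop j p)"
    using p unfolding spath_def walk_iff_successively by simp
  then have "successively E (drop j p)"
    unfolding successively_append_iff by blast
  then show ?thesis
    using p j unfolding spath_def walk_iff_successively
    by (auto simp: hd_drop_conv_nth dest: in_set_dropD)
qed

lemma spath_Cons:
  "spath V E u v p \<Longrightarrow> E y u \<Longrightarrow> y \<in> V \<Longrightarrow> y \<notin> set p \<Longrightarrow> spath V E y v (y # p)"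
  unfolding spath_def walk_iff_successively by (auto simp: successively_Cons)

lemma spath_snoc:
  "spath V E u v p \<Longrightarrow> E v y \<Longrightarrow> y \<in> V \<Longrightarrow> y \<notin> set p \<Longrightarrow> spath V E u y (p @ [y])"
  unfolding spath_def walk_iff_successively by (auto simp: successively_append_iff)

definition path_edges :: "'v list \<Rightarrow> 'v set set" where
  "path_edges p = (\<lambda>i. {p ! i, p ! Suc i}) ` {i. Suc i < length p}"

lemma path_edges_Cons:
  assumes "p \<noteq> []" shows "path_edges (y # p) = insert {y, hd p} (path_edges p)"
proof -
  have "{i. Suc i < length (y # p)} = insert 0 (Suc ` {i. Suc i < length p})"
    using assms by (auto simp: image_iff) (metis Suc_less_eq not0_implies_Suc)
  then show ?thesis
    using assms unfolding path_edges_def by (simp add: image_image hd_conv_nth)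
qed

lemma path_edges_subset: "e \<in> path_edges p \<Longrightarrow> e \<subseteq> set p"
  unfolding path_edges_def by auto

definition edge_factor ::
    "'v set \<Rightarrow> ('v \<Rightarrow> 'v \<Rightarrow> bool) \<Rightarrow> ('v \<Rightarrow> 'v \<Rightarrow> nat) \<Rightarrow> 'v list \<Rightarrow> 'v \<Rightarrow> nat" where
  "edge_factor V E d p w = (\<Prod>x \<in> {x \<in> V. E w x \<and> {w, x} \<notin> path_edges p}. d w x)"

definition path_ell ::
    "'v set \<Rightarrow> ('v \<Rightarrow> 'v \<Rightarrow> bool) \<Rightarrow> ('v \<Rightarrow> 'v \<Rightarrow> nat) \<Rightarrow> 'v list \<Rightarrow> nat" where
  "path_ell V E d p = (\<Prod>w \<in> {w \<in> set p. is_node V E w}. edge_factor V E d p w)"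

definition other_weights ::
    "'v set \<Rightarrow> ('v \<Rightarrow> 'v \<Rightarrow> bool) \<Rightarrow> ('v \<Rightarrow> 'v \<Rightarrow> nat) \<Rightarrow> 'v \<Rightarrow> 'v \<Rightarrow> nat" where
  "other_weights V E d v u = (\<Prod>x \<in> {x \<in> V. E v x \<and> x \<noteq> u}. d v x)"

lemma ell_eq_path_ell: "ell V E d u v = path_ell V E d (geodpath V E u v)"
  unfolding ell_def path_ell_def edge_factor_def geod_def edge_on_geod_def path_edges_def Let_def
  by (simp add: image_iff eq_commute)

lemma path_ell_edge:
  assumes "a \<noteq> b" "is_node V E a" "is_node V E b"
  shows "path_ell V E d [a, b] = other_weights V E d a b * other_weights V E d b a"
proof -
  have "path_edges [a, b] = {{a, b}}"
    using path_edges_Cons[of "[b]" a] by (simp add: path_edges_def)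
  moreover have "{w \<in> set [a, b]. is_node V E w} = {a, b}"
    using assms by auto
  moreover have "{a, x} = {a, b} \<longleftrightarrow> x = b" "{b, x} = {a, b} \<longleftrightarrow> x = a" for x
    using assms(1) by (auto simp: doubleton_eq_iff)
  ultimately show ?thesis
    using assms(1) unfolding path_ell_def edge_factor_def other_weights_def by simp
qed

lemma edge_factor_Cons_new:
  assumes "p \<noteq> []" "y \<notin> set p"
  shows "edge_factor V E d (y # p) y = other_weights V E d y (hd p)"
proof -
  have "{x \<in> V. E y x \<and> {y, x} \<notin> path_edges (y # p)} = {x \<in> V. E y x \<and> x \<noteq> hd p}"
    using assms unfolding path_edges_Cons[OF assms(1)]
    by (auto simp: doubleton_eq_iff dest: path_edges_subset)
  then show ?thesis
    unfolding edge_factor_def other_weights_def by simp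
qed

lemma edge_factor_Cons_old:
  assumes "p \<noteq> []" "y \<notin> set p" "w \<in> set p" "w \<noteq> hd p"
  shows "edge_factor V E d (y # p) w = edge_factor V E d p w"
proof -
  have "{w, x} \<noteq> {y, hd p}" for x
    using assms(2-4) by (auto simp: doubleton_eq_iff)
  then show ?thesis
    unfolding edge_factor_def path_edges_Cons[OF assms(1)] by simp
qed

context
  fixes V :: "'v set" and E :: "'v \<Rightarrow> 'v \<Rightarrow> bool"
  assumes tree: "is_tree V E"
begin

lemma tree_finite: "finite V"
  and tree_edge_in: "E x y \<Longrightarrow> x \<in> V \<and> y \<in> V"
  and tree_sym: "E x y \<Longrightarrow> E y x"
  and tree_irrefl: "\<not> E x x"
  using tree unfolding is_tree_def by blast+

lemma finite_leaves: "finite {l. is_leaf V E l}"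
  using tree_finite unfolding is_leaf_def by simp

lemma spath_unique: "spath V E u v p \<Longrightarrow> spath V E u v q \<Longrightarrow> p = q"
  using tree unfolding is_tree_def spath_def by (metis hd_in_set last_in_set subsetD)

lemma geodpath_spath: "u \<in> V \<Longrightarrow> v \<in> V \<Longrightarrow> spath V E u v (geodpath V E u v)"
  using tree unfolding is_tree_def geodpath_def by (metis theI')

lemma geodpath_eqI: "spath V E u v p \<Longrightarrow> geodpath V E u v = p"
  by (meson geodpath_spath spath_unique spath_ends_in)

lemma spath_rev: "spath V E u v p \<Longrightarrow> spath V E v u (rev p)"
  unfolding spath_def walk_iff_successively
  by (auto simp: hd_rev last_rev tree_sym elim: successively_mono)

lemma geodpath_rev: "u \<in> V \<Longrightarrow> v \<in> V \<Longrightarrow> geodpath V E v u = rev (geodpath V E u v)"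
  by (rule geodpath_eqI[OF spath_rev[OF geodpath_spath]])

lemma geod_sym: "u \<in> V \<Longrightarrow> v \<in> V \<Longrightarrow> geod V E v u = geod V E u v"
  unfolding geod_def by (simp add: geodpath_rev[of u v])

lemma spath_edge: "E u v \<Longrightarrow> spath V E u v [u, v]"
  unfolding spath_def walk_iff_successively using tree_edge_in tree_irrefl by auto

lemma geodpath_edge: "E u v \<Longrightarrow> geodpath V E u v = [u, v]"
  by (rule geodpath_eqI[OF spath_edge])

lemma geodpath_Cons:
  assumes "E y u" "v \<in> V" "y \<notin> geod V E u v"
  shows "geodpath V E y v = y # geodpath V E u v"
proof (rule geodpath_eqI)
  have "u \<in> V" "y \<in> V"
    using tree_edge_in[OF assms(1)] by auto
  with assms show "spath V E y v (y # geodpath V E u v)"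
    unfolding geod_def by (intro spath_Cons[OF geodpath_spath]) auto
qed

lemma in_geod_start: "u \<in> V \<Longrightarrow> v \<in> V \<Longrightarrow> u \<in> geod V E u v"
  using geodpath_spath unfolding geod_def spath_def by (metis hd_in_set)

lemma not_in_geod_back:
  assumes "E u y" "v \<in> V" "y \<in> geod V E u v"
  shows "u \<notin> geod V E y v"
proof -
  define p where "p = geodpath V E u v"
  have p: "spath V E u v p"
    unfolding p_def using assms tree_edge_in by (blast intro: geodpath_spath)
  then have "p \<noteq> []" "hd p = u" "distinct p"
    unfolding spath_def by auto
  then have u_notin_tl: "u \<notin> set (tl p)"
    by (cases p) auto
  obtain j where j: "j < length p" "p ! j = y"
    using assms(3) unfolding geod_def p_def[symmetric] by (auto simp: in_set_conv_nth)
  have "j \<noteq> 0"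
    using j \<open>p \<noteq> []\<close> \<open>hd p = u\<close> assms(1) tree_irrefl by (metis hd_conv_nth)
  then have "set (drop j p) \<subseteq> set (tl p)"
    by (cases j) (auto simp: drop_Suc dest: in_set_dropD)
  moreover have "geodpath V E y v = drop j p"
    using geodpath_eqI[OF spath_drop[OF p j(1)]] j(2) by simp
  ultimately show ?thesis
    using u_notin_tl unfolding geod_def by auto
qed

lemma geod_edge_side:
  assumes "E u y" "v \<in> V"
  shows "u \<in> geod V E y v \<longleftrightarrow> y \<notin> geod V E u v"
proof
  show "u \<in> geod V E y v \<Longrightarrow> y \<notin> geod V E u v"
    using not_in_geod_back[OF assms] by blast
next
  assume "y \<notin> geod V E u v"
  then have "geod V E y v = insert y (geod V E u v)"
    using geodpath_Cons[OF tree_sym[OF assms(1)] assms(2)] unfolding geod_def by simp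
  then show "u \<in> geod V E y v"
    using in_geod_start tree_edge_in[OF assms(1)] assms(2) by blast
qed

lemma leaf_if_spath_maximal:
  assumes p: "spath V E u z p" and len: "2 \<le> length p" and maximal: "\<And>x. E z x \<Longrightarrow> x \<in> set p"
  shows "is_leaf V E z"
proof -
  have "p = butlast p @ [z]"
    using p unfolding spath_def by (metis append_butlast_last_id)
  moreover have "butlast p \<noteq> []"
    using len by (auto simp: butlast_conv_take)
  ultimately obtain q y where q: "p = q @ [y, z]"
    by (metis append_butlast_last_id append_Cons append_assoc self_append_conv2)
  have yz: "E y z"
    using p unfolding spath_def walk_iff_successively q by (simp add: successively_append_iff)
  have "x = y" if xz: "E z x" for x
  proof -
    have "x \<noteq> z"
      using xz tree_irrefl by blast
    moreover have "x \<notin> set q"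
    proof
      assume "x \<in> set q"
      then obtain q1 q2 where "q = q1 @ x # q2"
        by (meson split_list)
      then have "spath V E x z (x # q2 @ [y, z])"
        using spath_drop[OF p, of "length q1"] q by simp
      then have "x # q2 @ [y, z] = [x, z]"
        using spath_unique spath_edge[OF tree_sym[OF xz]] by blast
      then show False
        by simp
    qed
    ultimately show ?thesis
      using maximal[OF xz] q by auto
  qed
  then have "{x \<in> V. E z x} = {y}"
    using yz tree_sym tree_edge_in by blast
  then show ?thesis
    using spath_ends_in[OF p] unfolding is_leaf_def valency_def by simp
qed

lemma exists_leaf_beyond:
  assumes uv: "E u v" shows "\<exists>z. is_leaf V E z \<and> v \<in> geod V E u z"
proof -
  define P where "P p \<longleftrightarrow> (\<exists>z. spath V E u z p \<and> take 2 p = [u, v])" for p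
  have "P [u, v]"
    unfolding P_def using spath_edge[OF uv] by auto
  moreover have "length p < Suc (card V)" if "P p" for p
    using that tree_finite unfolding P_def spath_def
    by (metis distinct_card card_mono le_imp_less_Suc)
  ultimately obtain p where "P p" and longest: "\<And>q. P q \<Longrightarrow> length q \<le> length p"
    using ex_has_greatest_nat[of P "[u, v]" length "Suc (card V)"] by blast
  then obtain z where p: "spath V E u z p" and start: "take 2 p = [u, v]"
    unfolding P_def by blast
  have len: "2 \<le> length p"
    using start by (metis length_take length_Cons list.size(3) min.bounded_iff numeral_2_eq_2 order_refl)
  have "x \<in> set p" if "E z x" for x
  proof (rule ccontr)
    assume "x \<notin> set p"
    then have "P (p @ [x])"
      using spath_snoc[OF p that] tree_edge_in[OF that] start len unfolding P_def by auto
    then show False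
      using longest by fastforce
  qed
  then have "is_leaf V E z"
    using leaf_if_spath_maximal[OF p len] by blast
  moreover have "v \<in> set p"
    using start by (metis in_set_takeD list.set_intros)
  ultimately show ?thesis
    using geodpath_eqI[OF p] unfolding geod_def by auto
qed

lemma leaf_sides_of_edge:
  assumes ab: "E a b"
  defines "Pa \<equiv> {l. is_leaf V E l \<and> a \<in> geod V E l b}"
    and "Pb \<equiv> {l. is_leaf V E l \<and> b \<in> geod V E l a}"
  shows "Pa \<inter> Pb = {}" "Pa \<union> Pb = {l. is_leaf V E l}" "Pa \<noteq> {}" "Pb \<noteq> {}"
    and "l \<in> Pa \<Longrightarrow> l \<in> V \<and> b \<notin> geod V E a l"
    and "l \<in> Pb \<Longrightarrow> l \<in> V \<and> a \<notin> geod V E b l"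
proof -
  have ba: "E b a" and V: "a \<in> V" "b \<in> V"
    using tree_sym[OF ab] tree_edge_in[OF ab] by auto
  have Pa: "Pa = {l. is_leaf V E l \<and> b \<notin> geod V E a l}"
    unfolding Pa_def is_leaf_def using geod_edge_side[OF ba] geod_sym V by blast
  have Pb: "Pb = {l. is_leaf V E l \<and> b \<in> geod V E a l}"
    unfolding Pb_def is_leaf_def using geod_sym V by blast
  show "Pa \<inter> Pb = {}" "Pa \<union> Pb = {l. is_leaf V E l}"
    unfolding Pa Pb by auto
  show "Pa \<noteq> {}"
    using exists_leaf_beyond[OF ba] geod_sym V(2) unfolding Pa_def is_leaf_def by blast
  show "Pb \<noteq> {}"
    using exists_leaf_beyond[OF ab] unfolding Pb by blast
  show "l \<in> Pa \<Longrightarrow> l \<in> V \<and> b \<notin> geod V E a l"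
    unfolding Pa is_leaf_def by blast
  show "l \<in> Pb \<Longrightarrow> l \<in> V \<and> a \<notin> geod V E b l"
    unfolding Pb is_leaf_def using not_in_geod_back[OF ab] by blast
qed

lemma edge_factor_Cons_hd:
  assumes p: "p \<noteq> []" "y \<notin> set p" and y: "E y (hd p)"
  shows "edge_factor V E d p (hd p) = d (hd p) y * edge_factor V E d (y # p) (hd p)"
proof -
  let ?S = "{x \<in> V. E (hd p) x \<and> {hd p, x} \<notin> path_edges (y # p)}"
  have "y \<noteq> hd p"
    using p by auto
  then have "{x \<in> V. E (hd p) x \<and> {hd p, x} \<notin> path_edges p} = insert y ?S"
    using p y tree_edge_in tree_sym unfolding path_edges_Cons[OF p(1)]
    by (auto simp: doubleton_eq_iff dest: path_edges_subset)
  moreover have "y \<notin> ?S"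
    unfolding path_edges_Cons[OF p(1)] by (simp add: insert_commute)
  moreover have "finite ?S"
    using tree_finite by simp
  ultimately show ?thesis
    unfolding edge_factor_def by simp
qed

lemma path_ell_Cons:
  assumes p: "p \<noteq> []" "y \<notin> set p" and y: "E y (hd p)" "is_node V E y"
    and hd: "is_node V E (hd p)"
  shows "path_ell V E d p * other_weights V E d y (hd p) = d (hd p) y * path_ell V E d (y # p)"
proof -
  define N where "N = {w \<in> set p. is_node V E w} - {hd p}"
  let ?F = "edge_factor V E d (y # p)"
  have N: "finite N" "hd p \<notin> N" "y \<notin> N" "y \<noteq> hd p"
    using p unfolding N_def by auto
  have "{w \<in> set p. is_node V E w} = insert (hd p) N"
    using p hd unfolding N_def by auto
  moreover have "(\<Prod>w\<in>N. edge_factor V E d p w) = prod ?F N"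
    using edge_factor_Cons_old[OF p] unfolding N_def by simp
  ultimately have "path_ell V E d p = d (hd p) y * (?F (hd p) * prod ?F N)"
    unfolding path_ell_def using N edge_factor_Cons_hd[OF p y(1)] by simp
  moreover have "{w \<in> set (y # p). is_node V E w} = insert y (insert (hd p) N)"
    using p hd y(2) unfolding N_def by auto
  then have "path_ell V E d (y # p) = other_weights V E d y (hd p) * (?F (hd p) * prod ?F N)"
    unfolding path_ell_def using p N edge_factor_Cons_new[OF p] by simp
  ultimately show ?thesis
    by simp
qed

lemma ell_across_edge:
  assumes ab: "E a b" and nodes: "is_node V E a" "is_node V E b"
    and l: "l \<in> V" "b \<notin> geod V E a l"
  shows "ell V E d a l * other_weights V E d b a = d a b * ell V E d b l"
proof -
  have "a \<in> V"
    using tree_edge_in[OF ab] by simp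
  then have p: "geodpath V E a l \<noteq> []" "hd (geodpath V E a l) = a"
    using geodpath_spath[OF _ l(1)] unfolding spath_def by auto
  show ?thesis
    using path_ell_Cons[OF p(1), of b d] l(2) tree_sym[OF ab] nodes
      geodpath_Cons[OF tree_sym[OF ab] l]
    unfolding ell_eq_path_ell geod_def p(2) by simp
qed

lemma ell_edge:
  assumes "E a b" "is_node V E a" "is_node V E b"
  shows "ell V E d a b = other_weights V E d a b * other_weights V E d b a"
  using assms tree_irrefl path_ell_edge
  unfolding ell_eq_path_ell geodpath_edge[OF assms(1)] by metis

end

definition ell_mass ::
    "'v set \<Rightarrow> ('v \<Rightarrow> 'v \<Rightarrow> bool) \<Rightarrow> ('v \<Rightarrow> 'v \<Rightarrow> nat) \<Rightarrow> 'v \<Rightarrow> 'v set \<Rightarrow> real" where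
  "ell_mass V E d v L = (\<Sum>l \<in> L. real (ell V E d v l))"

lemma ell_mass_proportional:
  assumes "\<And>l. l \<in> L \<Longrightarrow> ell V E d u l * q = e * ell V E d v l"
  shows "ell_mass V E d u L * q = e * ell_mass V E d v L"
  unfolding ell_mass_def sum_distrib_left sum_distrib_right
  by (intro sum.cong refl) (metis assms of_nat_mult)

lemma bary_eq_if_ell_proportional:
  assumes proportional: "\<And>l. l \<in> L \<Longrightarrow> ell V E d u l * q = e * ell V E d v l"
    and "q \<noteq> 0" "e \<noteq> 0"
  shows "bary V E d u L = bary V E d v L"
proof
  fix \<mu>
  define c where "c = real e / real q"
  have "c \<noteq> 0"
    using assms(2,3) unfolding c_def by simp
  have mass: "ell_mass V E d u L = c * ell_mass V E d v L"
    using ell_mass_proportional[OF proportional] assms(2) unfolding c_def by (simp add: field_simps)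
  have "real (ell V E d u \<mu>) = c * real (ell V E d v \<mu>)" if "\<mu> \<in> L"
    using proportional[OF that] assms(2) unfolding c_def by (simp add: field_simps flip: of_nat_mult)
  then show "bary V E d u L \<mu> = bary V E d v L \<mu>"
    using \<open>c \<noteq> 0\<close> mass unfolding bary_def ell_mass_def[symmetric] by simp
qed

lemma rho_eq_bary_combination:
  assumes "is_node V E u" and fin: "finite {l. is_leaf V E l}"
    and parts: "L1 \<inter> L2 = {}" "L1 \<union> L2 = {l. is_leaf V E l}"
    and pos: "0 < ell_mass V E d u L1" "0 < ell_mass V E d u L2"
  defines "t \<equiv> ell_mass V E d u L2 / (ell_mass V E d u L1 + ell_mass V E d u L2)"
  shows "rho V E d u = (\<lambda>\<mu>. (1 - t) * bary V E d u L1 \<mu> + t * bary V E d u L2 \<mu>)"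
proof
  fix \<mu>
  let ?m1 = "ell_mass V E d u L1" and ?m2 = "ell_mass V E d u L2"
  have "norm1 V E (wvec V E d u) = ell_mass V E d u {l. is_leaf V E l}"
    using assms(1) unfolding norm1_def wvec_def is_node_def ell_mass_def by simp
  also have "\<dots> = ?m1 + ?m2"
    using fin parts unfolding ell_mass_def by (metis finite_Un sum.union_disjoint)
  finally have "rho V E d u \<mu> = wvec V E d u \<mu> / (?m1 + ?m2)"
    by (simp add: rho_def)
  moreover have "1 - t = ?m1 / (?m1 + ?m2)"
    using pos unfolding t_def by (simp add: field_simps)
  moreover have "wvec V E d u \<mu> = (if \<mu> \<in> L1 \<union> L2 then real (ell V E d u \<mu>) else 0)"
    using assms(1) parts(2) unfolding wvec_def is_node_def by simp
  ultimately show "rho V E d u \<mu> = (1 - t) * bary V E d u L1 \<mu> + t * bary V E d u L2 \<mu>"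
    using parts(1) pos unfolding bary_def ell_mass_def[symmetric] t_def by auto
qed

lemma convex_parameter_less:
  fixes A B A' B' q q' e e' :: real
  assumes pos: "0 < A" "0 < B" "0 < A'" "0 < B'" "0 \<le> q" "0 \<le> q'"
    and A: "A * q' = e * A'" and B: "B' * q = e' * B" and det: "q * q' < e * e'"
  shows "B / (A + B) < B' / (A' + B')"
proof -
  have "0 < e * e'"
    using det mult_nonneg_nonneg[OF pos(5,6)] by linarith
  have "(B * A') * (e * e') = (A * B') * (q * q')"
  proof -
    have "(B * A') * (e * e') = (e * A') * (e' * B)"
      by (simp only: mult_ac)
    also have "\<dots> = (A * B') * (q * q')"
      unfolding A[symmetric] B[symmetric] by (simp only: mult_ac)
    finally show ?thesis .
  qed
  also have "\<dots> < (A * B') * (e * e')"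
    using pos det by simp
  finally have "B * A' < A * B'"
    using mult_less_cancel_right_pos[OF \<open>0 < e * e'\<close>] by blast
  then have "B * (A' + B') < B' * (A + B)"
    by (simp add: distrib_left mult.commute)
  then show ?thesis
    using pos by (simp add: frac_less2 divide_less_eq less_divide_eq mult.commute)
qed

context
  fixes V :: "'v set" and E :: "'v \<Rightarrow> 'v \<Rightarrow> bool" and d :: "'v \<Rightarrow> 'v \<Rightarrow> nat"
  assumes splice: "splice_diagram V E d"
begin

lemma splice_tree: "is_tree V E"
  and weight_pos: "is_node V E v \<Longrightarrow> E v u \<Longrightarrow> 0 < d v u"
  using splice unfolding splice_diagram_def by blast+

lemma ell_pos: "0 < ell V E d u v"
  unfolding ell_def by (intro prod_pos) (auto simp: weight_pos)

lemma other_weights_pos: "is_node V E v \<Longrightarrow> 0 < other_weights V E d v u"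
  unfolding other_weights_def by (intro prod_pos) (auto simp: weight_pos)

lemma edge_determinant_other_weights:
  assumes "edge_determinant V E d" "E a b" "is_node V E a" "is_node V E b"
  shows "other_weights V E d a b * other_weights V E d b a < d a b * d b a"
  using assms ell_edge[OF splice_tree] unfolding edge_determinant_def dtow_def
  by (simp add: geodpath_edge[OF splice_tree] tree_sym[OF splice_tree])

lemma ell_mass_pos: "finite L \<Longrightarrow> L \<noteq> {} \<Longrightarrow> 0 < ell_mass V E d u L"
  unfolding ell_mass_def using ell_pos by (simp add: sum_pos)

lemma leaf_sides_ell_across:
  assumes ab: "E a b" and nodes: "is_node V E a" "is_node V E b"
  defines "Pa \<equiv> {l. is_leaf V E l \<and> a \<in> geod V E l b}"
    and "Pb \<equiv> {l. is_leaf V E l \<and> b \<in> geod V E l a}"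
  shows "l \<in> Pa \<Longrightarrow> ell V E d a l * other_weights V E d b a = d a b * ell V E d b l"
    and "l \<in> Pb \<Longrightarrow> ell V E d b l * other_weights V E d a b = d b a * ell V E d a l"
proof -
  note sides = leaf_sides_of_edge[OF splice_tree ab, folded Pa_def Pb_def]
  show "l \<in> Pa \<Longrightarrow> ell V E d a l * other_weights V E d b a = d a b * ell V E d b l"
    using ell_across_edge[OF splice_tree ab nodes] sides(5) by blast
  show "l \<in> Pb \<Longrightarrow> ell V E d b l * other_weights V E d a b = d b a * ell V E d a l"
    using ell_across_edge[OF splice_tree tree_sym[OF splice_tree ab] nodes(2,1)] sides(6) by blast
qed

lemma leaf_sides_ell_mass_pos:
  assumes "E a b"
  defines "Pa \<equiv> {l. is_leaf V E l \<and> a \<in> geod V E l b}"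
    and "Pb \<equiv> {l. is_leaf V E l \<and> b \<in> geod V E l a}"
  shows "0 < ell_mass V E d u Pa" "0 < ell_mass V E d u Pb"
proof -
  note sides = leaf_sides_of_edge[OF splice_tree assms(1), folded Pa_def Pb_def]
  have "finite Pa" "finite Pb"
    using finite_leaves[OF splice_tree] sides(2) by (metis finite_Un)+
  then show "0 < ell_mass V E d u Pa" "0 < ell_mass V E d u Pb"
    using ell_mass_pos sides(3,4) by blast+
qed

lemma leaf_sides_bary_eq:
  assumes "E a b" "is_node V E a" "is_node V E b"
  defines "Pa \<equiv> {l. is_leaf V E l \<and> a \<in> geod V E l b}"
    and "Pb \<equiv> {l. is_leaf V E l \<and> b \<in> geod V E l a}"
  shows "bary V E d a Pa = bary V E d b Pa" "bary V E d a Pb = bary V E d b Pb"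
proof -
  note across = leaf_sides_ell_across[OF assms(1-3), folded Pa_def Pb_def]
  have "other_weights V E d a b \<noteq> 0" "other_weights V E d b a \<noteq> 0" "d a b \<noteq> 0" "d b a \<noteq> 0"
    using assms(1-3) other_weights_pos weight_pos tree_sym[OF splice_tree] by (metis less_irrefl)+
  then show "bary V E d a Pa = bary V E d b Pa" "bary V E d a Pb = bary V E d b Pb"
    using bary_eq_if_ell_proportional[OF across(1)] bary_eq_if_ell_proportional[OF across(2)]
    by simp_all
qed

lemma leaf_sides_parameter_less:
  assumes "edge_determinant V E d" "E a b" "is_node V E a" "is_node V E b"
  defines "Pa \<equiv> {l. is_leaf V E l \<and> a \<in> geod V E l b}"
    and "Pb \<equiv> {l. is_leaf V E l \<and> b \<in> geod V E l a}"
  shows "ell_mass V E d a Pb / (ell_mass V E d a Pa + ell_mass V E d a Pb)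
    < ell_mass V E d b Pb / (ell_mass V E d b Pa + ell_mass V E d b Pb)"
proof -
  note across = leaf_sides_ell_across[OF assms(2-4), folded Pa_def Pb_def]
  note masses = leaf_sides_ell_mass_pos[OF assms(2), folded Pa_def Pb_def]
  have "ell_mass V E d a Pa * other_weights V E d b a = d a b * ell_mass V E d b Pa"
    by (rule ell_mass_proportional[OF across(1)])
  moreover have "ell_mass V E d b Pb * other_weights V E d a b = d b a * ell_mass V E d a Pb"
    by (rule ell_mass_proportional[OF across(2)])
  moreover have
    "real (other_weights V E d a b) * real (other_weights V E d b a) < real (d a b) * real (d b a)"
    using edge_determinant_other_weights[OF assms(1-4)] by (simp flip: of_nat_mult)
  ultimately show ?thesis
    using convex_parameter_less[OF masses[of a] masses[of b] of_nat_0_le_iff of_nat_0_le_iff]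
    by blast
qed

end

theorem lemma5p6:
  fixes V :: "'v set" and E :: "'v \<Rightarrow> 'v \<Rightarrow> bool" and d :: "'v \<Rightarrow> 'v \<Rightarrow> nat"
    and a b :: 'v
  assumes "splice_diagram V E d"
    and "edge_determinant V E d"
    and "is_node V E a" and "is_node V E b" and "E a b"
  defines "Pa \<equiv> {l. is_leaf V E l \<and> a \<in> geod V E l b}"
    and "Pb \<equiv> {l. is_leaf V E l \<and> b \<in> geod V E l a}"
  shows "bary V E d a Pa = bary V E d b Pa \<and> bary V E d a Pb = bary V E d b Pb \<and>
    (\<exists>ta tb::real. 0 < ta \<and> ta < tb \<and> tb < 1 \<and>
       rho V E d a = (\<lambda>\<mu>. (1 - ta) * bary V E d a Pa \<mu> + ta * bary V E d a Pb \<mu>) \<and>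
       rho V E d b = (\<lambda>\<mu>. (1 - tb) * bary V E d a Pa \<mu> + tb * bary V E d a Pb \<mu>))"
proof -
  note splice = assms(1) and nodes = assms(3,4) and ab = assms(5)
  note sides = leaf_sides_of_edge[OF splice_tree[OF splice] ab, folded Pa_def Pb_def]
  note bary_eqs = leaf_sides_bary_eq[OF splice ab nodes, folded Pa_def Pb_def]
  note masses = leaf_sides_ell_mass_pos[OF splice ab, folded Pa_def Pb_def]
  note finite = finite_leaves[OF splice_tree[OF splice]]
  define ta where "ta = ell_mass V E d a Pb / (ell_mass V E d a Pa + ell_mass V E d a Pb)"
  define tb where "tb = ell_mass V E d b Pb / (ell_mass V E d b Pa + ell_mass V E d b Pb)"
  have "rho V E d a = (\<lambda>\<mu>. (1 - ta) * bary V E d a Pa \<mu> + ta * bary V E d a Pb \<mu>)"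
    unfolding ta_def by (rule rho_eq_bary_combination[OF nodes(1) finite sides(1,2) masses])
  moreover have "rho V E d b = (\<lambda>\<mu>. (1 - tb) * bary V E d a Pa \<mu> + tb * bary V E d a Pb \<mu>)"
    unfolding tb_def bary_eqs by (rule rho_eq_bary_combination[OF nodes(2) finite sides(1,2) masses])
  moreover have "ta < tb"
    unfolding ta_def tb_def Pa_def Pb_def
    by (rule leaf_sides_parameter_less[OF splice assms(2) ab nodes])
  moreover have "0 < ta" "tb < 1"
    unfolding ta_def tb_def using masses[of a] masses[of b] by simp_all
  ultimately show ?thesis
    using bary_eqs by blast
qed

end
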